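(* Let $\mathrm{SU}(2,1)$ denote the group of complex $3\times 3$ matrices of determinant $1$ preserving the Hermitian form $\langle z,w\rangle = z_1\overline{w_3}+z_2\overline{w_2}+z_3\overline{w_1}$ on $\mathbb{C}^3$. Let $\Gamma\subset \mathrm{SU}(2,1)$ be a subgroup, and let $\mathrm{Tr}(\Gamma)=\mathbb{Q}(\mathrm{Tr}(g) : g\in\Gamma)$. Suppose that $\Gamma$ contains a parabolic element and that $\Gamma$ is Zariski dense in $\mathrm{SU}(2,1)$. Then $\Gamma$ can be conjugated (within $\mathrm{SU}(2,1)$) to a subgroup of $\mathrm{SU}(2,1,\mathrm{Tr}(\Gamma))$, i.e. there exists $h\in\mathrm{SU}(2,1)$ such that every entry of every matrix in $h\Gamma h^{-1}$ lies in $\mathrm{Tr}(\Gamma)$.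
   Context: Complex hyperbolic plane $\mathbb{H}^2_{\mathbb{C}}$ is the image in $\mathbb{C}P^2$ of the vectors $z$ with $\langle z,z\rangle<0$, and its boundary $\partial\mathbb{H}^2_{\mathbb{C}}$ is the image of the nonzero vectors with $\langle z,z\rangle=0$; $\mathrm{SU}(2,1)$ acts on $\mathbb{H}^2_{\mathbb{C}}\cup\partial\mathbb{H}^2_{\mathbb{C}}$ projectively. An element of $\mathrm{SU}(2,1)$ is parabolic if its action fixes exactly one point of $\partial\mathbb{H}^2_{\mathbb{C}}$ and no point of $\mathbb{H}^2_{\mathbb{C}}$. For a field $K\subset\mathbb{C}$, $\mathrm{SU}(2,1,K)$ denotes the set of matrices in $\mathrm{SU}(2,1)$ with all entries in $K$. *)

theory Defs
  imports "HOL-Analysis.Analysis"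
begin

type_synonym cvec = "complex ^ 3"
type_synonym cmat = "complex ^ 3 ^ 3"

definition herm :: "cvec \<Rightarrow> cvec \<Rightarrow> complex" where
  "herm z w = z$1 * cnj (w$3) + z$2 * cnj (w$2) + z$3 * cnj (w$1)"

definition SU21 :: "cmat set" where
  "SU21 = {g. det g = 1 \<and> (\<forall>z w. herm (g *v z) (g *v w) = herm z w)}"

definition is_subgroup_SU21 :: "cmat set \<Rightarrow> bool" where
  "is_subgroup_SU21 G \<longleftrightarrow> G \<subseteq> SU21 \<and> mat 1 \<in> G
     \<and> (\<forall>a\<in>G. \<forall>b\<in>G. a ** b \<in> G) \<and> (\<forall>a\<in>G. matrix_inv a \<in> G)"

text \<open>Projective action: g fixes the point [z] (z nonzero) iff z is an eigenvector.\<close>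
definition fixes_pt :: "cmat \<Rightarrow> cvec \<Rightarrow> bool" where
  "fixes_pt g z \<longleftrightarrow> z \<noteq> 0 \<and> (\<exists>c. g *v z = c *s z)"

definition negative_vec :: "cvec \<Rightarrow> bool" where
  "negative_vec z \<longleftrightarrow> Re (herm z z) < 0 \<and> Im (herm z z) = 0"

definition null_vec :: "cvec \<Rightarrow> bool" where
  "null_vec z \<longleftrightarrow> z \<noteq> 0 \<and> herm z z = 0"

text \<open>Parabolic: fixes exactly one point of the boundary (a projective point,
  i.e. a complex line) and no point of complex hyperbolic space.\<close>
definition parabolic :: "cmat \<Rightarrow> bool" where
  "parabolic g \<longleftrightarrow> g \<in> SU21
     \<and> (\<nexists>z. negative_vec z \<and> fixes_pt g z)
     \<and> (\<exists>z. null_vec z \<and> fixes_pt g z)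
     \<and> (\<forall>z w. null_vec z \<and> fixes_pt g z \<and> null_vec w \<and> fixes_pt g w
              \<longrightarrow> (\<exists>c. w = c *s z))"

definition is_subfield :: "complex set \<Rightarrow> bool" where
  "is_subfield K \<longleftrightarrow> 0 \<in> K \<and> 1 \<in> K \<and> (\<forall>a\<in>K. \<forall>b\<in>K. a + b \<in> K \<and> a * b \<in> K)
     \<and> (\<forall>a\<in>K. - a \<in> K) \<and> (\<forall>a\<in>K. a \<noteq> 0 \<longrightarrow> inverse a \<in> K)"

definition trace_field :: "cmat set \<Rightarrow> complex set" where
  "trace_field G = \<Inter>{K. is_subfield K \<and> trace ` G \<subseteq> K}"

text \<open>Real polynomial functions of the real and imaginary parts of the entries
  (SU(2,1) is a real algebraic group).\<close>
inductive_set poly_fun :: "(cmat \<Rightarrow> real) set" where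
  const: "(\<lambda>_. c) \<in> poly_fun"
| re: "(\<lambda>g. Re (g $ i $ j)) \<in> poly_fun"
| im: "(\<lambda>g. Im (g $ i $ j)) \<in> poly_fun"
| add: "p \<in> poly_fun \<Longrightarrow> q \<in> poly_fun \<Longrightarrow> (\<lambda>g. p g + q g) \<in> poly_fun"
| mult: "p \<in> poly_fun \<Longrightarrow> q \<in> poly_fun \<Longrightarrow> (\<lambda>g. p g * q g) \<in> poly_fun"

definition zariski_dense_SU21 :: "cmat set \<Rightarrow> bool" where
  "zariski_dense_SU21 G \<longleftrightarrow>
     (\<forall>p\<in>poly_fun. (\<forall>g\<in>G. p g = 0) \<longrightarrow> (\<forall>g\<in>SU21. p g = 0))"

end

theory Submission
  imports Defs
begin

text \<open>
  Let \<open>p \<in> \<Gamma>\<close> be parabolic with fixed null line \<open>[v]\<close>. Zariski density means that no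
  nonzero bilinear expression \<open>u\<^sup>T g w\<close> vanishes on all of \<open>\<Gamma>\<close>, so the orbit \<open>\<Gamma> v\<close> spans \<open>\<complex>\<^sup>3\<close>
  and contains a hyperbolic pair; orthogonalising yields a frame \<open>F\<close> with scalar Gram matrix.
  In this frame \<open>p\<close> is upper triangular with diagonal \<open>(l, l\<^sup>-\<^sup>2, l)\<close>, \<open>|l| = 1\<close>, and \<open>l\<close> is a
  rational function of \<open>tr p\<close> and \<open>cnj (tr p) = tr p\<^sup>-\<^sup>1\<close>. A quadratic polynomial in \<open>p\<close> with
  coefficients in \<open>Tr(\<Gamma>)\<close> is therefore a nonzero multiple of the corner matrix unit, and taking
  traces of its products with \<open>g \<in> \<Gamma>\<close> shows \<open>c \<langle>g f, f\<rangle> \<in> Tr(\<Gamma>)\<close> for a fixed null vector \<open>f\<close>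
  and a constant \<open>c \<noteq> 0\<close>. Vectors whose rescaled pairings with \<open>\<Gamma> f\<close> lie in \<open>Tr(\<Gamma>)\<close> form
  \<open>Tr(\<Gamma>)\<close>-modules containing \<open>\<Gamma> f\<close>; a frame built from \<open>\<Gamma> f\<close> then has all Hermitian ratios in
  \<open>Tr(\<Gamma>)\<close>, so conjugating by it, rescaled into \<open>SU(2,1)\<close> by a cube root of its determinant,
  moves \<open>\<Gamma>\<close> into \<open>SU(2,1,Tr(\<Gamma>))\<close>.
\<close>

lemma vec_eq3: "(x::cvec) = y \<longleftrightarrow> x$1 = y$1 \<and> x$2 = y$2 \<and> x$3 = y$3"
  by (auto simp: vec_eq_iff forall_3)

lemma mat_eq3: "(A::cmat) = B \<longleftrightarrow>
   A$1$1 = B$1$1 \<and> A$1$2 = B$1$2 \<and> A$1$3 = B$1$3 \<and>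
   A$2$1 = B$2$1 \<and> A$2$2 = B$2$2 \<and> A$2$3 = B$2$3 \<and>
   A$3$1 = B$3$1 \<and> A$3$2 = B$3$2 \<and> A$3$3 = B$3$3"
  by (auto simp: vec_eq_iff forall_3)

lemma matrix_vector_mult_3: "((M::cmat) *v z) $ i = M$i$1 * z$1 + M$i$2 * z$2 + M$i$3 * z$3"
  by (simp add: matrix_vector_mult_def sum_3)

lemma matrix_matrix_mult_3:
  "((A::cmat) ** B) $ i $ j = A$i$1 * B$1$j + A$i$2 * B$2$j + A$i$3 * B$3$j"
  by (simp add: matrix_matrix_mult_def sum_3)

definition vec3 :: "complex \<Rightarrow> complex \<Rightarrow> complex \<Rightarrow> cvec" where
  "vec3 a b c = (\<chi> i. if i = 1 then a else if i = 2 then b else c)"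

lemma vec3_nth [simp]: "vec3 a b c $ 1 = a" "vec3 a b c $ 2 = b" "vec3 a b c $ 3 = c"
  by (auto simp: vec3_def)

definition mat3 :: "complex \<Rightarrow> complex \<Rightarrow> complex \<Rightarrow> complex \<Rightarrow> complex \<Rightarrow> complex \<Rightarrow>
    complex \<Rightarrow> complex \<Rightarrow> complex \<Rightarrow> cmat" where
  "mat3 a b c d e f g h k =
     (\<chi> i. if i = 1 then vec3 a b c else if i = 2 then vec3 d e f else vec3 g h k)"

lemma mat3_nth [simp]:
  "mat3 a b c d e f g h k $ 1 = vec3 a b c"
  "mat3 a b c d e f g h k $ 2 = vec3 d e f"
  "mat3 a b c d e f g h k $ 3 = vec3 g h k"
  by (auto simp: mat3_def)

definition mat_of_cols3 :: "cvec \<Rightarrow> cvec \<Rightarrow> cvec \<Rightarrow> cmat" where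
  "mat_of_cols3 a b c = (\<chi> i j. if j = 1 then a$i else if j = 2 then b$i else c$i)"

lemma mat_of_cols3_nth [simp]:
  "mat_of_cols3 a b c $ i $ 1 = a$i" "mat_of_cols3 a b c $ i $ 2 = b$i"
  "mat_of_cols3 a b c $ i $ 3 = c$i"
  by (auto simp: mat_of_cols3_def)

lemma column_nth [simp]: "column j M $ i = M $ i $ j"
  by (simp add: column_def)

lemma column_mat_of_cols3 [simp]:
  "column 1 (mat_of_cols3 a b c) = a" "column 2 (mat_of_cols3 a b c) = b"
  "column 3 (mat_of_cols3 a b c) = c"
  by (auto simp: vec_eq3)

lemma column_matrix_mult: "column j (A ** B) = A *v column j B"
  by (simp add: vec_eq_iff matrix_matrix_mult_def matrix_vector_mult_def)

lemma column_1_eq: "column 1 (M::cmat) = M *v vec3 1 0 0"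
  by (simp add: vec_eq3 matrix_vector_mult_3)

lemma matrix_vector_mult_scale: "(M::cmat) *v (c *s x) = c *s (M *v x)"
  by (simp add: vec_eq3 matrix_vector_mult_3 algebra_simps)

definition smult_mat :: "complex \<Rightarrow> cmat \<Rightarrow> cmat" where
  "smult_mat k A = (\<chi> i j. k * A $ i $ j)"

lemma smult_mat_nth [simp]: "smult_mat k A $ i $ j = k * A $ i $ j"
  by (simp add: smult_mat_def)

lemma smult_mat_mult_left: "smult_mat k A ** B = smult_mat k (A ** B)"
  and smult_mat_mult_right: "A ** smult_mat k B = smult_mat k (A ** B)"
  and smult_mat_smult_mat: "smult_mat a (smult_mat b A) = smult_mat (a * b) A"
  by (simp_all add: mat_eq3 matrix_matrix_mult_3 algebra_simps)

lemmas smult_mat_simps = smult_mat_mult_left smult_mat_mult_right smult_mat_smult_mat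

lemma smult_mat_one [simp]: "smult_mat 1 A = A"
  by (simp add: mat_eq3)

lemma smult_mat_mat [simp]: "smult_mat k (mat a) = mat (k * a)"
  by (simp add: mat_eq3 mat_def)

lemma mat_mult_eq_smult_mat: "mat k ** A = smult_mat k A"
  and mult_mat_eq_smult_mat: "A ** mat k = smult_mat k A"
  by (simp_all add: mat_eq3 matrix_matrix_mult_3 mat_def mult.commute)

lemma smult_mat_vector: "smult_mat k A *v x = k *s (A *v x)"
  by (simp add: vec_eq3 matrix_vector_mult_3 algebra_simps)

lemma mat_mult_vector: "mat k *v x = k *s (x :: 'a::semiring_1^'n)"
  unfolding matrix_vector_mult_def mat_def
  by (simp add: vec_eq_iff if_distrib[of "\<lambda>x. x * _"] cong: if_cong)

lemma trace_smult_mat: "trace (smult_mat k A) = k * trace A"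
  by (simp add: trace_def sum_3 algebra_simps)

lemma det_smult_mat: "det (smult_mat k A) = k ^ 3 * det A"
  by (simp add: det_3 algebra_simps power3_eq_cube)

lemma det_scalar_mat: "det (mat d :: cmat) = d ^ 3"
  by (simp add: det_3 mat_def power3_eq_cube)

lemma matrix_inv_unique:
  fixes A B :: "'a::field^'n^'n"
  assumes "A ** B = mat 1" shows "matrix_inv A = B"
proof -
  have BA: "B ** A = mat 1" using assms matrix_left_right_inverse by blast
  obtain A' where A': "A ** A' = mat 1" "A' ** A = mat 1" "matrix_inv A = A'"
    using someI_ex[of "\<lambda>A'. A ** A' = mat 1 \<and> A' ** A = mat 1"] assms BA
    unfolding matrix_inv_def by blast
  have "A' = A' ** (A ** B)" using assms by simp
  also have "\<dots> = B" by (simp add: matrix_mul_assoc A')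
  finally show ?thesis using A' by simp
qed

section \<open>The Hermitian form and its adjoint\<close>

definition rev3 :: "3 \<Rightarrow> 3" where
  "rev3 i = (if i = 1 then 3 else if i = 2 then 2 else 1)"

lemma rev3_simps [simp]: "rev3 1 = 3" "rev3 2 = 2" "rev3 3 = 1"
  by (auto simp: rev3_def)

text \<open>Adjoint for the form: its Gram matrix is the antidiagonal permutation \<open>J\<close>, so the
  adjoint of \<open>M\<close> is \<open>J M\<^sup>* J\<close>.\<close>
definition herm_adj :: "cmat \<Rightarrow> cmat" where
  "herm_adj M = (\<chi> i j. cnj (M $ rev3 j $ rev3 i))"

lemma herm_adj_nth [simp]: "herm_adj M $ i $ j = cnj (M $ rev3 j $ rev3 i)"
  by (simp add: herm_adj_def)

lemma herm_add_left: "herm (x + y) w = herm x w + herm y w"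
  and herm_add_right: "herm w (x + y) = herm w x + herm w y"
  and herm_diff_left: "herm (x - y) w = herm x w - herm y w"
  and herm_diff_right: "herm w (x - y) = herm w x - herm w y"
  and herm_scale_left: "herm (c *s x) w = c * herm x w"
  and herm_scale_right: "herm w (c *s x) = cnj c * herm w x"
  by (simp_all add: herm_def algebra_simps)

lemmas herm_linear = herm_add_left herm_add_right herm_diff_left herm_diff_right
  herm_scale_left herm_scale_right

lemma herm_zero_left [simp]: "herm 0 w = 0" and herm_zero_right [simp]: "herm w 0 = 0"
  by (simp_all add: herm_def)

lemma herm_commute: "herm w z = cnj (herm z w)"
  by (simp add: herm_def)

lemma herm_eq_0_commute: "herm w z = 0 \<longleftrightarrow> herm z w = 0"
  by (metis complex_cnj_zero_iff herm_commute)

lemma cnj_herm_self: "cnj (herm z z) = herm z z"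
  by (simp add: herm_def algebra_simps)

lemma herm_self_real: "herm z z = complex_of_real (Re (herm z z))"
  by (metis Reals_cnj_iff cnj_herm_self of_real_Re)

lemma herm_nondegenerate: assumes "\<And>z. herm z y = 0" shows "y = 0"
proof -
  have "herm (axis 1 1) y = 0" "herm (axis 2 1) y = 0" "herm (axis 3 1) y = 0"
    using assms by auto
  thus ?thesis by (simp add: herm_def axis_def vec_eq3)
qed

lemma herm_adj_left: "herm (M *v z) w = herm z (herm_adj M *v w)"
  by (simp add: herm_def matrix_vector_mult_3 algebra_simps)

lemma herm_adj_herm_adj [simp]: "herm_adj (herm_adj M) = M"
  by (simp add: mat_eq3)

lemma herm_adj_right: "herm z (M *v w) = herm (herm_adj M *v z) w"
  by (metis herm_adj_herm_adj herm_adj_left)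

lemma herm_adj_smult_mat: "herm_adj (smult_mat k A) = smult_mat (cnj k) (herm_adj A)"
  by (simp add: mat_eq3)

lemma trace_herm_adj: "trace (herm_adj M) = cnj (trace M)"
  by (simp add: trace_def sum_3)

lemma det_herm_adj: "det (herm_adj M) = cnj (det M)"
  by (simp add: det_3 algebra_simps)

lemma herm_adj_nth_column: "(herm_adj F *v y) $ i = herm y (column (rev3 i) F)"
  using exhaust_3[of i] by (auto simp: herm_def matrix_vector_mult_3 algebra_simps)

lemma gram_nth: "(herm_adj M ** M) $ i $ j = herm (column j M) (column (rev3 i) M)"
  using exhaust_3[of i] by (auto simp: matrix_matrix_mult_3 herm_def algebra_simps)

lemma herm_scaled_isometry:
  assumes "herm_adj F ** F = mat d"
  shows "herm (F *v x) (F *v y) = cnj d * herm x y"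
proof -
  have "herm (F *v x) (F *v y) = herm x ((herm_adj F ** F) *v y)"
    by (simp add: herm_adj_left matrix_vector_mul_assoc)
  thus ?thesis by (simp add: assms mat_mult_vector herm_scale_right)
qed

lemma herm_preserving_iff:
  "(\<forall>z w. herm (M *v z) (M *v w) = herm z w) \<longleftrightarrow> herm_adj M ** M = mat 1"
proof
  assume pres: "\<forall>z w. herm (M *v z) (M *v w) = herm z w"
  have "(herm_adj M ** M) *v w = mat 1 *v w" for w
  proof -
    have "herm z ((herm_adj M ** M) *v w - w) = 0" for z
      using pres by (simp add: herm_diff_right herm_adj_left matrix_vector_mul_assoc[symmetric])
    thus ?thesis using herm_nondegenerate by fastforce
  qed
  thus "herm_adj M ** M = mat 1" by (simp add: matrix_eq)
qed (simp add: herm_scaled_isometry)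

lemma matrix_inv_scaled_isometry:
  assumes "herm_adj F ** F = mat d" "d \<noteq> 0"
  shows "matrix_inv F = smult_mat (1/d) (herm_adj F)"
    and "F ** matrix_inv F = mat 1" "matrix_inv F ** F = mat 1" "F ** herm_adj F = mat d"
proof -
  have left: "smult_mat (1/d) (herm_adj F) ** F = mat 1"
    using assms by (simp add: smult_mat_mult_left)
  thus inv: "matrix_inv F = smult_mat (1/d) (herm_adj F)"
    by (intro matrix_inv_unique) (use matrix_left_right_inverse in blast)
  show "matrix_inv F ** F = mat 1" using left inv by simp
  thus right: "F ** matrix_inv F = mat 1" using matrix_left_right_inverse by blast
  have "F ** herm_adj F = smult_mat d (smult_mat (1/d) (F ** herm_adj F))"
    using assms(2) by (simp add: smult_mat_smult_mat)
  also have "smult_mat (1/d) (F ** herm_adj F) = mat 1"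
    using right by (simp add: inv smult_mat_mult_right)
  finally show "F ** herm_adj F = mat d" by simp
qed

lemma SU21_iff: "g \<in> SU21 \<longleftrightarrow> det g = 1 \<and> herm_adj g ** g = mat 1"
  using herm_preserving_iff unfolding SU21_def by auto

lemma matrix_inv_SU21: "g \<in> SU21 \<Longrightarrow> matrix_inv g = herm_adj g"
  using matrix_inv_scaled_isometry(1)[of g 1] by (simp add: SU21_iff)

section \<open>Subfields and the trace field\<close>

context
  fixes K assumes K: "is_subfield K"
begin

lemma subfield_0: "0 \<in> K" and subfield_1: "1 \<in> K"
  using K by (simp_all add: is_subfield_def)

lemma subfield_add: "a \<in> K \<Longrightarrow> b \<in> K \<Longrightarrow> a + b \<in> K"
  and subfield_mult: "a \<in> K \<Longrightarrow> b \<in> K \<Longrightarrow> a * b \<in> K"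
  and subfield_uminus: "a \<in> K \<Longrightarrow> - a \<in> K"
  using K by (simp_all add: is_subfield_def)

lemma subfield_inverse: "a \<in> K \<Longrightarrow> inverse a \<in> K"
  using K subfield_0 by (cases "a = 0") (auto simp: is_subfield_def)

lemma subfield_diff: "a \<in> K \<Longrightarrow> b \<in> K \<Longrightarrow> a - b \<in> K"
  by (metis diff_conv_add_uminus subfield_add subfield_uminus)

lemma subfield_divide: "a \<in> K \<Longrightarrow> b \<in> K \<Longrightarrow> a / b \<in> K"
  by (simp add: divide_inverse subfield_mult subfield_inverse)

lemma subfield_of_nat: "of_nat n \<in> K"
  by (induction n) (auto intro: subfield_add subfield_0 subfield_1)

lemma subfield_numeral: "numeral n \<in> K"
  using subfield_of_nat[of "numeral n"] by simp

lemma subfield_power: "a \<in> K \<Longrightarrow> a ^ n \<in> K"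
  by (induction n) (auto intro: subfield_mult subfield_1)

lemmas subfield_intros = subfield_0 subfield_1 subfield_add subfield_mult subfield_uminus
  subfield_inverse subfield_diff subfield_divide subfield_of_nat subfield_numeral subfield_power

end

lemma is_subfield_cnj_preimage: "is_subfield K \<Longrightarrow> is_subfield {z. cnj z \<in> K}"
  unfolding is_subfield_def by auto

lemma is_subfield_trace_field: "is_subfield (trace_field G)"
  unfolding trace_field_def is_subfield_def by blast

lemma trace_in_trace_field: "g \<in> G \<Longrightarrow> trace g \<in> trace_field G"
  unfolding trace_field_def by blast

lemma trace_field_least: "is_subfield K \<Longrightarrow> trace ` G \<subseteq> K \<Longrightarrow> trace_field G \<subseteq> K"
  unfolding trace_field_def by blast

context
  fixes \<Gamma> :: "cmat set"
  assumes \<Gamma>: "is_subgroup_SU21 \<Gamma>"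
begin

lemma subgroup_SU21_subset: "g \<in> \<Gamma> \<Longrightarrow> g \<in> SU21"
  and subgroup_SU21_one: "mat 1 \<in> \<Gamma>"
  and subgroup_SU21_mult: "a \<in> \<Gamma> \<Longrightarrow> b \<in> \<Gamma> \<Longrightarrow> a ** b \<in> \<Gamma>"
  using \<Gamma> by (auto simp: is_subgroup_SU21_def)

lemma subgroup_SU21_herm_adj: "g \<in> \<Gamma> \<Longrightarrow> herm_adj g \<in> \<Gamma>"
  using \<Gamma> matrix_inv_SU21 subgroup_SU21_subset by (auto simp: is_subgroup_SU21_def)

lemma subgroup_SU21_herm: "g \<in> \<Gamma> \<Longrightarrow> herm (g *v z) (g *v w) = herm z w"
  by (metis SU21_iff herm_preserving_iff subgroup_SU21_subset)

text \<open>Since \<open>tr (g\<^sup>-\<^sup>1) = cnj (tr g)\<close> in \<open>SU(2,1)\<close>, the trace field is closed under conjugation.\<close>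
lemma trace_field_cnj: "z \<in> trace_field \<Gamma> \<Longrightarrow> cnj z \<in> trace_field \<Gamma>"
proof -
  have "trace ` \<Gamma> \<subseteq> {z. cnj z \<in> trace_field \<Gamma>}"
  proof
    fix x assume "x \<in> trace ` \<Gamma>"
    then obtain g where "g \<in> \<Gamma>" "x = trace g" by auto
    thus "x \<in> {z. cnj z \<in> trace_field \<Gamma>}"
      using subgroup_SU21_herm_adj trace_in_trace_field by (fastforce simp: trace_herm_adj)
  qed
  hence "trace_field \<Gamma> \<subseteq> {z. cnj z \<in> trace_field \<Gamma>}"
    by (intro trace_field_least is_subfield_cnj_preimage is_subfield_trace_field)
  thus "z \<in> trace_field \<Gamma> \<Longrightarrow> cnj z \<in> trace_field \<Gamma>" by blast
qed

end

section \<open>Zariski density\<close>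

definition bilin :: "cvec \<Rightarrow> cmat \<Rightarrow> cvec \<Rightarrow> complex" where
  "bilin u g v = (\<Sum>i\<in>UNIV. \<Sum>j\<in>UNIV. u$i * g$i$j * v$j)"

lemma bilin_mat3: "bilin u (mat3 a b c d e f g h k) v =
   u$1 * (a * v$1 + b * v$2 + c * v$3) + u$2 * (d * v$1 + e * v$2 + f * v$3)
   + u$3 * (g * v$1 + h * v$2 + k * v$3)"
  by (simp add: bilin_def sum_3 algebra_simps)

lemma poly_fun_sum:
  "finite S \<Longrightarrow> (\<And>x. x \<in> S \<Longrightarrow> f x \<in> poly_fun) \<Longrightarrow> (\<lambda>g. \<Sum>x\<in>S. f x g) \<in> poly_fun"
proof (induction S rule: finite_induct)
  case empty thus ?case using poly_fun.const[of 0] by simp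
next
  case (insert x F)
  thus ?case using poly_fun.add[of "f x" "\<lambda>g. \<Sum>x\<in>F. f x g"] by simp
qed

lemma poly_fun_scaled_entry:
  "(\<lambda>g. Re (c * g$i$j)) \<in> poly_fun" "(\<lambda>g. Im (c * g$i$j)) \<in> poly_fun"
proof -
  have "(\<lambda>g. Re (c * g$i$j)) = (\<lambda>g. (\<lambda>_. Re c) g * (\<lambda>g. Re (g$i$j)) g
      + (\<lambda>_. - Im c) g * (\<lambda>g. Im (g$i$j)) g)"
    by auto
  also have "\<dots> \<in> poly_fun" by (intro poly_fun.intros)
  finally show "(\<lambda>g. Re (c * g$i$j)) \<in> poly_fun" .
  have "(\<lambda>g. Im (c * g$i$j)) = (\<lambda>g. (\<lambda>_. Re c) g * (\<lambda>g. Im (g$i$j)) g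
      + (\<lambda>_. Im c) g * (\<lambda>g. Re (g$i$j)) g)"
    by auto
  also have "\<dots> \<in> poly_fun" by (intro poly_fun.intros)
  finally show "(\<lambda>g. Im (c * g$i$j)) \<in> poly_fun" .
qed

lemma poly_fun_bilin: "(\<lambda>g. Re (bilin u g v)) \<in> poly_fun" "(\<lambda>g. Im (bilin u g v)) \<in> poly_fun"
proof -
  have eq: "bilin u g v = (\<Sum>i\<in>UNIV. \<Sum>j\<in>UNIV. (u$i * v$j) * g$i$j)" for g
    unfolding bilin_def by (simp add: algebra_simps)
  have "(\<lambda>g. Re (bilin u g v))
      = (\<lambda>g. \<Sum>i\<in>UNIV. (\<lambda>i g. \<Sum>j\<in>UNIV. (\<lambda>j g. Re ((u$i * v$j) * g$i$j)) j g) i g)"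
    by (simp add: eq)
  also have "\<dots> \<in> poly_fun" by (intro poly_fun_sum poly_fun_scaled_entry) simp_all
  finally show "(\<lambda>g. Re (bilin u g v)) \<in> poly_fun" .
  have "(\<lambda>g. Im (bilin u g v))
      = (\<lambda>g. \<Sum>i\<in>UNIV. (\<lambda>i g. \<Sum>j\<in>UNIV. (\<lambda>j g. Im ((u$i * v$j) * g$i$j)) j g) i g)"
    by (simp add: eq)
  also have "\<dots> \<in> poly_fun" by (intro poly_fun_sum poly_fun_scaled_entry) simp_all
  finally show "(\<lambda>g. Im (bilin u g v)) \<in> poly_fun" .
qed

lemma zariski_dense_bilin_vanishes:
  assumes "zariski_dense_SU21 G" "\<forall>g\<in>G. bilin u g v = 0" "g \<in> SU21"
  shows "bilin u g v = 0"
proof -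
  have "Re (bilin u g v) = 0" "Im (bilin u g v) = 0"
    using assms poly_fun_bilin[of u v] unfolding zariski_dense_SU21_def by force+
  thus ?thesis by (simp add: complex_eq_iff)
qed

lemma SU21_test_elements:
  "r \<noteq> 0 \<Longrightarrow> cnj r = r \<Longrightarrow> mat3 r 0 0 0 1 0 0 0 (1/r) \<in> SU21"
  "mat3 0 0 (-1) 0 (-1) 0 (-1) 0 0 \<in> SU21"
  "mat3 1 0 \<i> 0 1 0 0 0 1 \<in> SU21"
  "mat3 1 (-1) (-1/2) 0 1 1 0 0 1 \<in> SU21"
  "mat3 1 \<i> (-1/2) 0 1 \<i> 0 0 1 \<in> SU21"
  "mat3 1 0 0 1 1 0 (-1/2) (-1) 1 \<in> SU21"
  "mat3 1 0 0 \<i> 1 0 (-1/2) \<i> 1 \<in> SU21"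
  unfolding SU21_iff by (simp_all add: det_3 mat_eq3 matrix_matrix_mult_3 mat_def)

text \<open>The products \<open>u\<^sub>i v\<^sub>j\<close> are forced to vanish one by one by evaluating the bilinear
  expression on the elements above.\<close>
lemma bilin_vanishing_on_SU21:
  assumes "\<forall>g\<in>SU21. bilin u g v = 0"
  shows "u = 0 \<or> v = 0"
proof -
  define p where "p i j = u$i * v$j" for i j
  note el = SU21_test_elements
  have eI: "p 1 1 + p 2 2 + p 3 3 = 0"
    using assms el(1)[of 1] by (force simp: bilin_mat3 p_def algebra_simps)
  have eD2: "2 * p 1 1 + p 2 2 + p 3 3 / 2 = 0"
    using assms el(1)[of 2] by (force simp: bilin_mat3 p_def algebra_simps)
  have eD3: "p 1 1 / 2 + p 2 2 + 2 * p 3 3 = 0"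
    using assms el(1)[of "1/2"] by (force simp: bilin_mat3 p_def algebra_simps)
  have "bilin u (mat3 0 0 (-1) 0 (-1) 0 (-1) 0 0) v = 0" using assms el(2) by blast
  hence eJ: "p 1 3 + p 2 2 + p 3 1 = 0"
    unfolding bilin_mat3 p_def by (simp add: algebra_simps) (metis add.assoc neg_eq_iff_add_eq_0)
  have eV: "p 1 1 + p 2 2 + p 3 3 + \<i> * p 1 3 = 0"
    using assms el(3) by (force simp: bilin_mat3 p_def algebra_simps)
  have eT1: "p 1 1 + p 2 2 + p 3 3 - p 1 2 - p 1 3 / 2 + p 2 3 = 0"
    using assms el(4) by (force simp: bilin_mat3 p_def algebra_simps)
  have eTi: "p 1 1 + p 2 2 + p 3 3 + \<i> * p 1 2 - p 1 3 / 2 + \<i> * p 2 3 = 0"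
    using assms el(5) by (force simp: bilin_mat3 p_def algebra_simps)
  have eL1: "p 1 1 + p 2 2 + p 3 3 + p 2 1 - p 3 1 / 2 - p 3 2 = 0"
    using assms el(6) by (force simp: bilin_mat3 p_def algebra_simps)
  have eLi: "p 1 1 + p 2 2 + p 3 3 + \<i> * p 2 1 - p 3 1 / 2 + \<i> * p 3 2 = 0"
    using assms el(7) by (force simp: bilin_mat3 p_def algebra_simps)
  have b: "p 2 2 = - p 1 1 - p 3 3"
    using eI by (metis add.commute add_diff_cancel_left' diff_minus_eq_add minus_diff_eq
        neg_eq_iff_add_eq_0)
  have c: "p 3 3 = 2 * p 1 1" using eD2 b by (simp add: field_simps)
  have "p 1 1 = 0" using eD3 b c by (simp add: field_simps)
  hence diag: "p 1 1 = 0" "p 2 2 = 0" "p 3 3 = 0" using b c by auto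
  have anti: "p 1 3 = 0" "p 3 1 = 0" using eJ eV diag by auto
  have "p 2 3 = p 1 2" "\<i> * p 1 2 + \<i> * p 2 3 = 0"
    using eT1 eTi diag anti by (simp_all add: algebra_simps)
  hence upper: "p 1 2 = 0" "p 2 3 = 0" by auto
  have "p 3 2 = p 2 1" "\<i> * p 2 1 + \<i> * p 3 2 = 0"
    using eL1 eLi diag anti by (simp_all add: algebra_simps)
  hence lower: "p 2 1 = 0" "p 3 2 = 0" by auto
  have "\<forall>i j. u$i * v$j = 0"
    using diag anti upper lower unfolding p_def by (auto simp: forall_3)
  thus ?thesis by (metis vec_eq3 zero_index mult_eq_0_iff)
qed

lemma zariski_dense_bilin_nonzero:
  assumes "zariski_dense_SU21 \<Gamma>" "u \<noteq> 0" "v \<noteq> 0"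
  shows "\<exists>g\<in>\<Gamma>. bilin u g v \<noteq> 0"
proof (rule ccontr)
  assume "\<not> (\<exists>g\<in>\<Gamma>. bilin u g v \<noteq> 0)"
  hence "\<forall>g\<in>SU21. bilin u g v = 0" using assms(1) zariski_dense_bilin_vanishes by blast
  thus False using bilin_vanishing_on_SU21 assms(2,3) by blast
qed

section \<open>Frames adapted to the form\<close>

lemma herm_eq_bilin: "herm (g *v v) w = bilin (\<chi> i. cnj (w $ rev3 i)) g v"
  by (simp add: herm_def bilin_def sum_3 matrix_vector_mult_3 algebra_simps)

definition cofactor_vec :: "cvec \<Rightarrow> cvec \<Rightarrow> cvec" where
  "cofactor_vec a b = vec3 (b$2*a$3 - a$2*b$3) (a$1*b$3 - b$1*a$3) (b$1*a$2 - a$1*b$2)"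

lemma det_mat_of_cols3_eq_bilin: "det (mat_of_cols3 a (g *v v) b) = bilin (cofactor_vec a b) g v"
  by (simp add: det_3 bilin_def cofactor_vec_def sum_3 matrix_vector_mult_3 algebra_simps)

lemma cofactor_vec_nonzero:
  assumes "herm a a = 0" "herm b a \<noteq> 0"
  shows "cofactor_vec a b \<noteq> 0"
proof
  assume "cofactor_vec a b = 0"
  hence e: "b$2*a$3 = a$2*b$3" "a$1*b$3 = b$1*a$3" "b$1*a$2 = a$1*b$2"
    by (auto simp: cofactor_vec_def vec_eq3)
  have "a \<noteq> 0" using assms by auto
  then obtain k where k: "a$k \<noteq> 0" by (auto simp: vec_eq3)
  have "b = (b$k / a$k) *s a"
    using exhaust_3[of k] k e by (auto simp: vec_eq3 field_simps)
  hence "herm b a = (b$k / a$k) * herm a a" by (metis herm_scale_left)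
  thus False using assms by simp
qed

text \<open>Zariski density supplies the two group elements through nonvanishing bilinear
  expressions in \<open>g\<close>: first \<open>\<langle>\<gamma> v, v\<rangle>\<close>, then a \<open>3\<times>3\<close> determinant.\<close>
lemma zariski_dense_orbit_basis:
  assumes \<Gamma>: "zariski_dense_SU21 \<Gamma>" and "null_vec v"
  obtains \<gamma> \<delta> where "\<gamma> \<in> \<Gamma>" "\<delta> \<in> \<Gamma>" "herm v (\<gamma> *v v) \<noteq> 0"
    "det (mat_of_cols3 v (\<delta> *v v) (\<gamma> *v v)) \<noteq> 0"
proof -
  have v0: "v \<noteq> 0" and vv: "herm v v = 0" using \<open>null_vec v\<close> by (auto simp: null_vec_def)
  have "(\<chi> i. cnj (v $ rev3 i)) \<noteq> 0" using v0 by (auto simp: vec_eq3)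
  then obtain \<gamma> where \<gamma>: "\<gamma> \<in> \<Gamma>" "bilin (\<chi> i. cnj (v $ rev3 i)) \<gamma> v \<noteq> 0"
    using zariski_dense_bilin_nonzero[OF \<Gamma>] v0 by blast
  hence \<gamma>v: "herm (\<gamma> *v v) v \<noteq> 0" by (simp add: herm_eq_bilin)
  hence "cofactor_vec v (\<gamma> *v v) \<noteq> 0" using cofactor_vec_nonzero vv by blast
  then obtain \<delta> where "\<delta> \<in> \<Gamma>" "bilin (cofactor_vec v (\<gamma> *v v)) \<delta> v \<noteq> 0"
    using zariski_dense_bilin_nonzero[OF \<Gamma>] v0 by blast
  moreover have "herm v (\<gamma> *v v) \<noteq> 0" using \<gamma>v herm_eq_0_commute by blast
  ultimately show ?thesis using that \<gamma>(1) by (simp add: det_mat_of_cols3_eq_bilin)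
qed

text \<open>Gram--Schmidt against a hyperbolic pair of null vectors \<open>v, w\<close>.\<close>
definition witt_mid :: "cvec \<Rightarrow> cvec \<Rightarrow> cvec \<Rightarrow> cvec" where
  "witt_mid v x w = x - (herm x w / herm v w) *s v - (herm x v / herm w v) *s w"

definition witt_frame :: "cvec \<Rightarrow> cvec \<Rightarrow> cvec \<Rightarrow> cmat" where
  "witt_frame v x w = (let f = witt_mid v x w in mat_of_cols3 ((herm f f / herm v w) *s v) f w)"

lemma herm_witt_mid:
  assumes "herm v v = 0" "herm w w = 0" "herm v w \<noteq> 0"
  shows "herm (witt_mid v x w) v = 0" "herm (witt_mid v x w) w = 0"
proof -
  have "herm w v \<noteq> 0" using assms(3) herm_eq_0_commute by blast
  thus "herm (witt_mid v x w) v = 0" "herm (witt_mid v x w) w = 0"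
    using assms unfolding witt_mid_def by (simp_all add: herm_linear)
qed

lemma witt_frame_gram:
  assumes vv: "herm v v = 0" and ww: "herm w w = 0" and vw: "herm v w \<noteq> 0"
    and basis: "det (mat_of_cols3 v x w) \<noteq> 0"
  defines "f \<equiv> witt_mid v x w"
  shows "herm_adj (witt_frame v x w) ** witt_frame v x w = mat (herm f f)"
    and "Re (herm f f) > 0"
proof -
  define a where "a = herm v w"
  define D where "D = det (mat_of_cols3 v x w)"
  have wv: "herm w v = cnj a" using herm_commute a_def by metis
  have fv: "herm f v = 0" "herm v f = 0" and fw: "herm f w = 0" "herm w f = 0"
    using herm_witt_mid[OF vv ww vw] herm_eq_0_commute unfolding f_def by blast+
  have ff: "cnj (herm f f) = herm f f" by (rule cnj_herm_self)
  define F0 where "F0 = mat_of_cols3 v f w"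
  have "herm_adj F0 ** F0 = mat3 a 0 0 0 (herm f f) 0 0 0 (cnj a)"
    unfolding mat_eq3 gram_nth F0_def using fv fw vv ww wv by (simp add: a_def)
  moreover have "det F0 = D"
    unfolding F0_def D_def f_def witt_mid_def by (simp add: det_3 algebra_simps)
  ultimately have "herm f f * (a * cnj a) = cnj D * D"
    using det_mul[of "herm_adj F0" F0] by (simp only: det_herm_adj) (simp add: det_3 algebra_simps)
  hence "complex_of_real (Re (herm f f) * (cmod a)\<^sup>2) = complex_of_real ((cmod D)\<^sup>2)"
    by (metis complex_norm_square herm_self_real mult.commute of_real_mult)
  hence "Re (herm f f) * (cmod a)\<^sup>2 = (cmod D)\<^sup>2" using of_real_eq_iff by blast
  moreover have "(cmod D)\<^sup>2 > 0" "(cmod a)\<^sup>2 > 0" using basis vw by (simp_all add: D_def a_def)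
  ultimately show "Re (herm f f) > 0" by (metis zero_less_mult_pos2)
  have ka: "herm f f / a * a = herm f f" using vw by (simp add: a_def)
  show "herm_adj (witt_frame v x w) ** witt_frame v x w = mat (herm f f)"
    unfolding mat_eq3 gram_nth witt_frame_def Let_def f_def[symmetric]
    using fv fw vv ww wv ka ff
    by (simp add: herm_linear mat_def a_def)
qed

lemma cube_root_with_norm:
  assumes "cnj D * D = complex_of_real r ^ 3" "r > 0"
  obtains s where "s ^ 3 = D" "cnj s * s = complex_of_real r"
proof -
  have "D \<noteq> 0" using assms by auto
  define s where "s = exp (Ln D / 3)"
  have s3: "s ^ 3 = D"
    unfolding s_def using \<open>D \<noteq> 0\<close> by (simp add: exp_of_nat_mult[symmetric])
  have "complex_of_real ((cmod D)\<^sup>2) = complex_of_real (r ^ 3)"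
    unfolding complex_norm_square using assms(1) by (simp add: mult.commute)
  hence "(cmod D)\<^sup>2 = r ^ 3" using of_real_eq_iff by blast
  moreover have "(cmod D)\<^sup>2 = ((cmod s)\<^sup>2) ^ 3"
    by (simp add: s3[symmetric] norm_power power_mult[symmetric])
  ultimately have "((cmod s)\<^sup>2) ^ 3 = r ^ 3" by simp
  hence "(cmod s)\<^sup>2 = r" by (rule power_eq_imp_eq_base) (use \<open>r > 0\<close> in auto)
  hence "complex_of_real ((cmod s)\<^sup>2) = complex_of_real r" by simp
  hence "cnj s * s = complex_of_real r" by (simp only: complex_norm_square mult.commute)
  thus ?thesis using that s3 by blast
qed

lemma rescale_into_SU21:
  assumes gram: "herm_adj F ** F = mat (of_real r)" and "r > 0"
  obtains h where "h \<in> SU21" "\<And>g. h ** g ** matrix_inv h = matrix_inv F ** g ** F"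
proof -
  define d :: complex where "d = of_real r"
  have d0: "d \<noteq> 0" and cd: "cnj d = d" using \<open>r > 0\<close> by (simp_all add: d_def)
  note inv = matrix_inv_scaled_isometry[OF gram[folded d_def] d0]
  have DD: "cnj (det F) * det F = d ^ 3"
    using arg_cong[OF gram[folded d_def], of det] by (simp add: det_mul det_herm_adj det_scalar_mat)
  then obtain s where s3: "s ^ 3 = det F" and ss: "cnj s * s = d"
    using cube_root_with_norm \<open>r > 0\<close> unfolding d_def by blast
  have s0: "s \<noteq> 0" using ss d0 by auto
  define h where "h = smult_mat (s / d) (herm_adj F)"
  have hinv: "matrix_inv h = smult_mat (1 / s) F"
    using gram[folded d_def] s0 d0
    by (intro matrix_inv_unique) (simp add: h_def smult_mat_simps)
  have "herm_adj h ** h = smult_mat (s * cnj s / (d * cnj d)) (F ** herm_adj F)"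
    by (simp add: h_def herm_adj_smult_mat smult_mat_simps)
  also have "\<dots> = mat (s * cnj s / (d * cnj d) * d)" by (simp add: inv(4))
  also have "s * cnj s / (d * cnj d) * d = 1" using ss cd d0 by (simp add: field_simps)
  finally have "herm_adj h ** h = mat 1" .
  moreover have "det h = (s ^ 3 / d ^ 3) * cnj (det F)"
    by (simp add: h_def det_smult_mat det_herm_adj power_divide)
  hence "det h = 1" using DD s3 d0 by (simp add: field_simps)
  moreover have "h ** g ** matrix_inv h = matrix_inv F ** g ** F" for g
    unfolding hinv using s0 by (simp add: inv(1) h_def smult_mat_simps)
  ultimately show ?thesis using that SU21_iff by blast
qed

lemma conj_scaled_isometry_nth:
  assumes "herm_adj F ** F = mat d" "d \<noteq> 0"
  shows "(matrix_inv F ** A ** F) $ i $ j = herm (A *v column j F) (column (rev3 i) F) / d"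
proof -
  have "(matrix_inv F ** A ** F) $ i $ j = column j (matrix_inv F ** A ** F) $ i" by simp
  also have "\<dots> = (smult_mat (1/d) (herm_adj F) *v (A *v column j F)) $ i"
    by (simp add: column_matrix_mult matrix_vector_mul_assoc
        matrix_inv_scaled_isometry(1)[OF assms])
  also have "\<dots> = herm (A *v column j F) (column (rev3 i) F) / d"
    by (simp add: smult_mat_vector herm_adj_nth_column)
  finally show ?thesis .
qed

section \<open>Parabolic elements\<close>

lemma fixes_pt_conj:
  assumes "F ** Fi = mat 1" "Fi ** F = mat 1"
  shows "fixes_pt (Fi ** p ** F) y \<longleftrightarrow> fixes_pt p (F *v y)"
proof -
  have y: "y = Fi *v (F *v y)" using assms(2) by (simp add: matrix_vector_mul_assoc)
  have "Fi ** p ** F *v y = c *s y \<longleftrightarrow> p *v (F *v y) = c *s (F *v y)" for c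
  proof
    assume "Fi ** p ** F *v y = c *s y"
    hence "F *v (Fi ** p ** F *v y) = c *s (F *v y)" by (simp add: matrix_vector_mult_scale)
    thus "p *v (F *v y) = c *s (F *v y)"
      by (simp add: matrix_vector_mul_assoc matrix_mul_assoc assms(1))
  next
    assume "p *v (F *v y) = c *s (F *v y)"
    hence "Fi *v (p *v (F *v y)) = c *s y" by (metis y matrix_vector_mult_scale)
    thus "Fi ** p ** F *v y = c *s y" by (simp add: matrix_vector_mul_assoc matrix_mul_assoc)
  qed
  moreover have "y \<noteq> 0 \<longleftrightarrow> F *v y \<noteq> 0" by (metis y matrix_vector_mult_0_right)
  ultimately show ?thesis unfolding fixes_pt_def by auto
qed

lemma scaled_isometry_null_negative:
  assumes gram: "herm_adj F ** F = mat (of_real r)" and "r > 0"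
  shows "null_vec (F *v y) \<longleftrightarrow> null_vec y" and "negative_vec (F *v y) \<longleftrightarrow> negative_vec y"
proof -
  have "complex_of_real r \<noteq> 0" using \<open>r > 0\<close> by simp
  have hF: "herm (F *v y) (F *v y) = of_real r * herm y y"
    using herm_scaled_isometry[OF gram] by simp
  have "y = matrix_inv F *v (F *v y)"
    using matrix_inv_scaled_isometry(3)[OF gram \<open>complex_of_real r \<noteq> 0\<close>]
    by (simp add: matrix_vector_mul_assoc)
  hence "F *v y = 0 \<longleftrightarrow> y = 0" by (metis matrix_vector_mult_0_right)
  thus "null_vec (F *v y) \<longleftrightarrow> null_vec y"
    using hF \<open>complex_of_real r \<noteq> 0\<close> by (simp add: null_vec_def)
  show "negative_vec (F *v y) \<longleftrightarrow> negative_vec y"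
    using hF \<open>r > 0\<close> by (simp add: negative_vec_def zero_less_mult_iff mult_less_0_iff)
qed

lemma SU21_conj:
  assumes "p \<in> SU21" and gram: "herm_adj F ** F = mat (of_real r)" and "r > 0"
  shows "matrix_inv F ** p ** F \<in> SU21"
proof -
  have "complex_of_real r \<noteq> 0" using \<open>r > 0\<close> by simp
  note inv = matrix_inv_scaled_isometry[OF gram this]
  have hF: "herm (F *v x) (F *v y) = of_real r * herm x y" for x y
    using herm_scaled_isometry[OF gram] by simp
  have "of_real r * herm (matrix_inv F ** p ** F *v x) (matrix_inv F ** p ** F *v y)
      = herm (p *v (F *v x)) (p *v (F *v y))" for x y
    by (simp add: hF[symmetric] matrix_vector_mul_assoc matrix_mul_assoc inv(2))
  hence "herm (matrix_inv F ** p ** F *v x) (matrix_inv F ** p ** F *v y) = herm x y" for x y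
    using assms(1) hF \<open>complex_of_real r \<noteq> 0\<close> by (simp add: SU21_def)
  moreover have "det (matrix_inv F ** p ** F) = 1"
    using assms(1) arg_cong[OF inv(3), of det] by (simp add: SU21_def det_mul)
  ultimately show ?thesis by (simp add: SU21_def)
qed

lemma parabolic_conj:
  assumes par: "parabolic p" and gram: "herm_adj F ** F = mat (of_real r)" and "r > 0"
  shows "parabolic (matrix_inv F ** p ** F)"
proof -
  define P where "P = matrix_inv F ** p ** F"
  have "complex_of_real r \<noteq> 0" using \<open>r > 0\<close> by simp
  note inv = matrix_inv_scaled_isometry[OF gram this]
  note null = scaled_isometry_null_negative(1)[OF gram \<open>r > 0\<close>]
  note neg = scaled_isometry_null_negative(2)[OF gram \<open>r > 0\<close>]
  have fixP: "fixes_pt P y \<longleftrightarrow> fixes_pt p (F *v y)" for y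
    unfolding P_def using fixes_pt_conj[OF inv(2,3)] .
  have "P \<in> SU21" using par SU21_conj[OF _ gram \<open>r > 0\<close>] by (simp add: P_def parabolic_def)
  moreover have "\<nexists>y. negative_vec y \<and> fixes_pt P y"
    using par fixP neg by (auto simp: parabolic_def)
  moreover have "\<exists>y. null_vec y \<and> fixes_pt P y"
  proof -
    obtain z where "null_vec z" "fixes_pt p z" using par by (auto simp: parabolic_def)
    moreover have "F *v (matrix_inv F *v z) = z" by (simp add: matrix_vector_mul_assoc inv(2))
    ultimately have "null_vec (matrix_inv F *v z) \<and> fixes_pt P (matrix_inv F *v z)"
      using null[of "matrix_inv F *v z"] fixP[of "matrix_inv F *v z"] by simp
    thus ?thesis by blast
  qed
  moreover have "\<forall>z w. null_vec z \<and> fixes_pt P z \<and> null_vec w \<and> fixes_pt P w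
      \<longrightarrow> (\<exists>c. w = c *s z)"
  proof (intro allI impI)
    fix z w assume "null_vec z \<and> fixes_pt P z \<and> null_vec w \<and> fixes_pt P w"
    hence "null_vec (F *v z) \<and> fixes_pt p (F *v z) \<and> null_vec (F *v w) \<and> fixes_pt p (F *v w)"
      by (simp add: fixP null)
    then obtain c where "F *v w = c *s (F *v z)"
      using par unfolding parabolic_def by blast
    hence "matrix_inv F *v (F *v w) = c *s (matrix_inv F *v (F *v z))"
      by (simp add: matrix_vector_mult_scale)
    thus "\<exists>c. w = c *s z" by (auto simp: matrix_vector_mul_assoc inv(3))
  qed
  ultimately show ?thesis unfolding parabolic_def P_def[symmetric] by blast
qed

lemma SU21_upper_triangular:
  assumes "P \<in> SU21" "P $ 2 $ 1 = 0" "P $ 3 $ 1 = 0"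
  shows "P $ 3 $ 2 = 0" "cnj (P$3$3) * P$1$1 = 1" "cnj (P$2$2) * P$2$2 = 1"
    "cnj (P$3$3) * P$1$2 + cnj (P$2$3) * P$2$2 = 0" "P$1$1 * P$2$2 * P$3$3 = 1"
proof -
  have pr: "(herm_adj P ** P) $ i $ j = mat 1 $ i $ j" for i j
    using assms(1) by (simp add: SU21_iff)
  show l: "cnj (P$3$3) * P$1$1 = 1"
    using pr[of 1 1] assms(2,3) by (simp add: matrix_matrix_mult_3 mat_def)
  have "cnj (P$1$1) * P$3$2 = 0"
    using pr[of 3 2] assms(2,3) by (simp add: matrix_matrix_mult_3 mat_def)
  thus P32: "P $ 3 $ 2 = 0" using l by auto
  show "cnj (P$2$2) * P$2$2 = 1"
    using pr[of 2 2] assms(2,3) P32 by (simp add: matrix_matrix_mult_3 mat_def)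
  show "cnj (P$3$3) * P$1$2 + cnj (P$2$3) * P$2$2 = 0"
    using pr[of 1 2] assms(2,3) P32 by (simp add: matrix_matrix_mult_3 mat_def)
  show "P$1$1 * P$2$2 * P$3$3 = 1" using assms P32 by (simp add: SU21_iff det_3)
qed

text \<open>If \<open>|l| \<noteq> 1\<close>, the eigenvalue \<open>\<mu> = 1 / cnj l\<close> has an eigenvector outside \<open>[e\<^sub>1]\<close>, and it
  is null because the form is preserved; this contradicts uniqueness of the fixed boundary point.\<close>
lemma parabolic_triangular_unimodular:
  assumes par: "parabolic P" and Pm: "P = mat3 l a b 0 \<nu> c 0 0 \<mu>"
    and l\<mu>: "cnj \<mu> * l = 1" and \<nu>: "cnj \<nu> * \<nu> = 1"
  shows "l * cnj l = 1"
proof (rule ccontr)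
  assume nu: "l * cnj l \<noteq> 1"
  have l0: "l \<noteq> 0" using l\<mu> by auto
  have "\<mu> * cnj l = 1" using arg_cong[OF l\<mu>, of cnj] by simp
  hence "\<mu> = 1 / cnj l" using l0 by (simp add: field_simps)
  hence "\<mu> * cnj \<mu> = 1 / (l * cnj l)" by simp
  hence mm: "\<mu> * cnj \<mu> \<noteq> 1" using nu by (metis divide_eq_1_iff)
  have nm: "\<nu> \<noteq> \<mu>" using mm \<nu> by (auto simp: mult.commute)
  have lm: "l \<noteq> \<mu>" using nu l\<mu> by (metis mult.commute)
  define y2 where "y2 = - c / (\<nu> - \<mu>)"
  define y1 where "y1 = - (a * y2 + b) / (l - \<mu>)"
  define y where "y = vec3 y1 y2 1"
  have h1: "y2 * (\<nu> - \<mu>) = - c" using nm by (simp add: y2_def)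
  have h2: "y1 * (l - \<mu>) = - (a * y2 + b)" using lm by (simp add: y1_def)
  have Py: "P *v y = \<mu> *s y"
    using h1 h2 by (simp add: Pm y_def vec_eq3 matrix_vector_mult_3; intro conjI; algebra)
  have "herm y y = herm (P *v y) (P *v y)" using par by (simp add: parabolic_def SU21_def)
  also have "\<dots> = (\<mu> * cnj \<mu>) * herm y y" unfolding Py by (simp add: herm_linear)
  finally have "null_vec y" using mm by (simp add: null_vec_def y_def vec_eq3)
  moreover have "fixes_pt P y" using Py by (auto simp: fixes_pt_def y_def vec_eq3)
  moreover have "null_vec (vec3 1 0 0)" by (simp add: null_vec_def herm_def vec_eq3)
  moreover have "fixes_pt P (vec3 1 0 0)"
    by (auto simp: Pm fixes_pt_def vec_eq3 matrix_vector_mult_3 intro!: exI[of _ l])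
  ultimately obtain k where "y = k *s vec3 1 0 0" using par unfolding parabolic_def by blast
  thus False by (simp add: y_def vec_eq3)
qed

lemma parabolic_upper_triangular:
  assumes par: "parabolic P" and "P $ 2 $ 1 = 0" "P $ 3 $ 1 = 0"
  defines "l \<equiv> P $ 1 $ 1"
  shows "P = mat3 l (P$1$2) (P$1$3) 0 (1 / l\<^sup>2) (P$2$3) 0 0 l"
    and "l * cnj l = 1" and "cnj l * P$1$2 + cnj (P$2$3) / l\<^sup>2 = 0"
proof -
  have SU: "P \<in> SU21" using par by (simp add: parabolic_def)
  note tri = SU21_upper_triangular[OF SU assms(2,3), folded l_def]
  have Pm: "P = mat3 l (P$1$2) (P$1$3) 0 (P$2$2) (P$2$3) 0 0 (P$3$3)"
    using assms(2,3) tri(1) by (simp add: mat_eq3 l_def)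
  have unit: "l * cnj l = 1" by (rule parabolic_triangular_unimodular[OF par Pm tri(2,3)])
  have l0: "l \<noteq> 0" using unit by auto
  have \<mu>: "P$3$3 = l" using tri(2) unit l0
    by (metis complex_cnj_cnj complex_cnj_mult complex_cnj_one mult.commute mult_left_cancel)
  hence \<nu>: "P$2$2 = 1 / l\<^sup>2" using tri(5) l0 by (simp add: field_simps power2_eq_square)
  show "P = mat3 l (P$1$2) (P$1$3) 0 (1 / l\<^sup>2) (P$2$3) 0 0 l" using Pm \<mu> \<nu> by simp
  show "l * cnj l = 1" by (rule unit)
  show "cnj l * P$1$2 + cnj (P$2$3) / l\<^sup>2 = 0" using tri(4) \<mu> \<nu> by simp
qed

lemma unimodular_eigenvalue_in_subfield:
  assumes K: "is_subfield K" and unit: "l * cnj l = 1"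
    and t: "t = 2 * l + 1 / l\<^sup>2" "t \<in> K" "cnj t \<in> K"
  shows "l \<in> K"
proof (cases "l ^ 3 = 1")
  case True
  have "l \<noteq> 0" using unit by auto
  hence "1 / l\<^sup>2 = l" using True by (simp add: field_simps power2_eq_square power3_eq_cube)
  hence "t = 3 * l" using t(1) by simp
  moreover have "t / 3 \<in> K" using K t(2) by (simp add: subfield_intros)
  ultimately show ?thesis by simp
next
  case False
  have l0: "l \<noteq> 0" using unit by auto
  have cl: "cnj l = 1 / l" using unit l0 by (simp add: field_simps)
  have ct: "cnj t = 2 / l + l\<^sup>2" using t(1) cl by (simp add: field_simps)
  have "6 * cnj t - 2 * t\<^sup>2 = -2 * (l ^ 3 - 1)\<^sup>2 / l ^ 4"
    unfolding ct unfolding t(1) using l0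
    by (simp add: field_simps power2_eq_square power3_eq_cube; algebra)
  hence den: "6 * cnj t - 2 * t\<^sup>2 \<noteq> 0" using False l0 by simp
  have "l * (6 * cnj t - 2 * t\<^sup>2) = 9 - t * cnj t"
    unfolding ct unfolding t(1) using l0
    by (simp add: field_simps power2_eq_square power3_eq_cube; algebra)
  hence "l = (9 - t * cnj t) / (6 * cnj t - 2 * t\<^sup>2)" using den by (simp add: eq_divide_eq)
  moreover have "(9 - t * cnj t) / (6 * cnj t - 2 * t\<^sup>2) \<in> K"
    using K t(2,3) by (simp add: subfield_intros)
  ultimately show ?thesis by simp
qed

definition matrix_quadratic :: "complex \<Rightarrow> complex \<Rightarrow> complex \<Rightarrow> cmat \<Rightarrow> cmat" where
  "matrix_quadratic a0 a1 a2 P = mat a0 + smult_mat a1 P + smult_mat a2 (P ** P)"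

lemma matrix_add_rdistrib: "(A + B) ** C = A ** C + B ** (C :: 'a::semiring_1^'n^'m)"
  by (simp add: vec_eq_iff matrix_matrix_mult_def sum.distrib algebra_simps)

lemma matrix_quadratic_conj:
  assumes "Fi ** F = mat 1"
  shows "matrix_quadratic a0 a1 a2 (Fi ** p ** F) = Fi ** matrix_quadratic a0 a1 a2 p ** F"
proof -
  have "F ** Fi = mat 1" using assms matrix_left_right_inverse by blast
  hence cancel: "F ** (Fi ** X) = X" for X by (simp add: matrix_mul_assoc)
  have "(Fi ** p ** F) ** (Fi ** p ** F) = Fi ** (p ** p) ** F"
    by (simp add: matrix_mul_assoc[symmetric] cancel)
  thus ?thesis
    using assms unfolding matrix_quadratic_def
    by (simp add: matrix_add_ldistrib matrix_add_rdistrib smult_mat_simps mat_mult_eq_smult_mat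
        mult_mat_eq_smult_mat)
qed

lemma trace_matrix_quadratic_conj:
  assumes "Fi ** F = mat 1"
  shows "trace (matrix_quadratic a0 a1 a2 (Fi ** p ** F) ** (Fi ** g ** F))
       = trace (matrix_quadratic a0 a1 a2 p ** g)"
proof -
  have "F ** Fi = mat 1" using assms matrix_left_right_inverse by blast
  hence cancel: "F ** (Fi ** X) = X" for X by (simp add: matrix_mul_assoc)
  have "trace (matrix_quadratic a0 a1 a2 (Fi ** p ** F) ** (Fi ** g ** F))
      = trace (Fi ** (matrix_quadratic a0 a1 a2 p ** (g ** F)))"
    unfolding matrix_quadratic_conj[OF assms] by (simp add: matrix_mul_assoc[symmetric] cancel)
  also have "\<dots> = trace ((matrix_quadratic a0 a1 a2 p ** (g ** F)) ** Fi)"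
    by (rule trace_mul_sym)
  also have "(matrix_quadratic a0 a1 a2 p ** (g ** F)) ** Fi = matrix_quadratic a0 a1 a2 p ** g"
    by (simp add: matrix_mul_assoc[symmetric] \<open>F ** Fi = mat 1\<close>)
  finally show ?thesis .
qed

lemma trace_corner_mult: "trace (mat3 0 0 e 0 0 0 0 0 0 ** M) = e * M$3$1"
  by (simp add: trace_def sum_3 matrix_matrix_mult_3)

lemma triangular_quadratic_corner:
  assumes "P = mat3 l a b 0 \<nu> c 0 0 l"
  shows "matrix_quadratic (l * \<nu>) (- (l + \<nu>)) 1 P = mat3 0 0 (a * c + b * (l - \<nu>)) 0 0 0 0 0 0"
  using assms
  by (simp add: matrix_quadratic_def mat_eq3 mat_def matrix_matrix_mult_3 algebra_simps)

lemma triangular_negative_fixed_point: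
  assumes P: "P = mat3 l a b 0 \<nu> c 0 0 l" and "a * y2 + b = 0" "\<nu> * y2 + c = l * y2"
  shows "\<exists>y. negative_vec y \<and> fixes_pt P y"
proof -
  define y1 where "y1 = - complex_of_real (1 + (cmod y2)\<^sup>2)"
  have "P *v vec3 y1 y2 1 = l *s vec3 y1 y2 1"
    using assms by (simp add: vec_eq3 matrix_vector_mult_3 algebra_simps)
  hence "fixes_pt P (vec3 y1 y2 1)" by (auto simp: fixes_pt_def vec_eq3)
  moreover have "y2 * cnj y2 = complex_of_real ((cmod y2)\<^sup>2)" by (simp only: complex_norm_square)
  hence "negative_vec (vec3 y1 y2 1)"
    by (simp add: negative_vec_def herm_def y1_def; smt (verit) zero_le_power2)
  ultimately show ?thesis by blast
qed

text \<open>For diagonal \<open>(l, \<nu>, l)\<close>, \<open>(P - l)(P - \<nu>)\<close> is a multiple of the corner matrix unit.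
  If the multiple vanishes, the absence of negative fixed points forces \<open>\<nu> = l\<close> and then
  \<open>P - l\<close> itself is a nonzero multiple of the corner unit.\<close>
lemma parabolic_triangular_annihilator:
  assumes P: "P = mat3 l a b 0 (1 / l\<^sup>2) c 0 0 l" and unit: "l * cnj l = 1"
    and orth: "cnj l * a + cnj c / l\<^sup>2 = 0"
    and noneg: "\<nexists>y. negative_vec y \<and> fixes_pt P y"
  obtains e a0 a1 a2 where "e \<noteq> 0"
    "\<And>K. is_subfield K \<Longrightarrow> l \<in> K \<Longrightarrow> a0 \<in> K \<and> a1 \<in> K \<and> a2 \<in> K"
    "matrix_quadratic a0 a1 a2 P = mat3 0 0 e 0 0 0 0 0 0"
proof (cases "a * c + b * (l - 1 / l\<^sup>2) = 0")
  case False
  moreover have "l * (1 / l\<^sup>2) \<in> K \<and> - (l + 1 / l\<^sup>2) \<in> K \<and> 1 \<in> K"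
    if "is_subfield K" "l \<in> K" for K
    using that by (simp add: subfield_intros)
  ultimately show ?thesis using that triangular_quadratic_corner[OF P] by blast
next
  case e0: True
  define \<nu> where "\<nu> = 1 / l\<^sup>2"
  have Pm: "P = mat3 l a b 0 \<nu> c 0 0 l" using P by (simp add: \<nu>_def)
  have l0: "l \<noteq> 0" using unit by auto
  have e0': "a * c + b * (l - \<nu>) = 0" using e0 by (simp add: \<nu>_def)
  have "\<nu> = l"
  proof (rule ccontr)
    assume "\<nu> \<noteq> l"
    hence "l - \<nu> \<noteq> 0" by simp
    hence "a * (c / (l - \<nu>)) + b = 0" "\<nu> * (c / (l - \<nu>)) + c = l * (c / (l - \<nu>))"
      using e0' by (simp_all add: field_simps)
    thus False using triangular_negative_fixed_point[OF Pm] noneg by blast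
  qed
  hence "a * c = 0" using e0 by (simp add: \<nu>_def)
  hence ac: "a = 0 \<and> c = 0" using orth l0 \<open>\<nu> = l\<close> by (auto simp: \<nu>_def)
  have "b \<noteq> 0"
    using triangular_negative_fixed_point[OF Pm, of 0] noneg ac \<open>\<nu> = l\<close> by auto
  moreover have "matrix_quadratic (- l) 1 0 P = mat3 0 0 b 0 0 0 0 0 0"
    using ac \<open>\<nu> = l\<close> by (simp add: Pm matrix_quadratic_def mat_eq3 mat_def)
  moreover have "- l \<in> K \<and> 1 \<in> K \<and> 0 \<in> K" if "is_subfield K" "l \<in> K" for K
    using that by (simp add: subfield_intros)
  ultimately show ?thesis using that by blast
qed

lemma orbit_witt_frame:
  assumes \<Gamma>: "is_subgroup_SU21 \<Gamma>" "zariski_dense_SU21 \<Gamma>" and v: "null_vec v"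
  obtains \<gamma> \<delta> r where "\<gamma> \<in> \<Gamma>" "\<delta> \<in> \<Gamma>" "herm v (\<gamma> *v v) \<noteq> 0" "r > 0"
    "herm (witt_mid v (\<delta> *v v) (\<gamma> *v v)) (witt_mid v (\<delta> *v v) (\<gamma> *v v)) = of_real r"
    "herm_adj (witt_frame v (\<delta> *v v) (\<gamma> *v v)) ** witt_frame v (\<delta> *v v) (\<gamma> *v v) = mat (of_real r)"
proof -
  obtain \<gamma> \<delta> where \<gamma>\<delta>: "\<gamma> \<in> \<Gamma>" "\<delta> \<in> \<Gamma>" "herm v (\<gamma> *v v) \<noteq> 0"
    "det (mat_of_cols3 v (\<delta> *v v) (\<gamma> *v v)) \<noteq> 0"
    using zariski_dense_orbit_basis[OF \<Gamma>(2) v] by blast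
  have "herm v v = 0" "herm (\<gamma> *v v) (\<gamma> *v v) = 0"
    using v subgroup_SU21_herm[OF \<Gamma>(1) \<gamma>\<delta>(1)] by (simp_all add: null_vec_def)
  note gram = witt_frame_gram[OF this \<gamma>\<delta>(3,4)]
  show ?thesis using that[OF \<gamma>\<delta>(1-3) gram(2)] gram(1) by (metis herm_self_real)
qed

lemma trace_conj:
  fixes Fi F p :: cmat
  assumes "Fi ** F = mat 1" shows "trace (Fi ** p ** F) = trace p"
proof -
  have "F ** Fi = mat 1" using assms matrix_left_right_inverse by blast
  have "trace (Fi ** p ** F) = trace (F ** (Fi ** p))" by (rule trace_mul_sym)
  also have "\<dots> = trace p" by (simp add: matrix_mul_assoc \<open>F ** Fi = mat 1\<close>)
  finally show ?thesis .
qed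

lemma conj_eigenvector_first_column:
  fixes Fi F p :: cmat
  assumes "Fi ** F = mat 1" "column 1 F = \<kappa> *s v" "p *v v = l *s v"
  shows "column 1 (Fi ** p ** F) = l *s vec3 1 0 0"
proof -
  have "column 1 (Fi ** p ** F) = Fi *v (p *v column 1 F)"
    by (simp add: column_matrix_mult matrix_vector_mul_assoc)
  also have "p *v column 1 F = l *s column 1 F"
    using assms(2,3) by (simp add: matrix_vector_mult_scale mult.commute)
  also have "Fi *v (l *s column 1 F) = l *s column 1 (Fi ** F)"
    by (simp add: matrix_vector_mult_scale column_matrix_mult)
  finally show ?thesis by (simp add: assms(1) column_1_eq)
qed

lemma trace_matrix_quadratic_in_trace_field:
  assumes \<Gamma>: "is_subgroup_SU21 \<Gamma>" and "p \<in> \<Gamma>" "g \<in> \<Gamma>"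
    and coeffs: "a0 \<in> trace_field \<Gamma>" "a1 \<in> trace_field \<Gamma>" "a2 \<in> trace_field \<Gamma>"
  shows "trace (matrix_quadratic a0 a1 a2 p ** g) \<in> trace_field \<Gamma>"
proof -
  have "trace (matrix_quadratic a0 a1 a2 p ** g)
      = a0 * trace g + a1 * trace (p ** g) + a2 * trace (p ** p ** g)"
    by (simp add: matrix_quadratic_def matrix_add_rdistrib trace_add trace_smult_mat
        smult_mat_mult_left mat_mult_eq_smult_mat matrix_mul_assoc[symmetric])
  moreover have "p ** g \<in> \<Gamma>" "p ** p ** g \<in> \<Gamma>"
    using subgroup_SU21_mult[OF \<Gamma>] assms(2,3) by auto
  ultimately show ?thesis
    using coeffs assms(3) trace_in_trace_field is_subfield_trace_field
    by (simp add: subfield_intros)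
qed

lemma parabolic_frame_annihilator:
  assumes \<Gamma>: "is_subgroup_SU21 \<Gamma>" and p: "p \<in> \<Gamma>" "parabolic p" "p *v v = l *s v"
    and gram: "herm_adj F ** F = mat (of_real r)" "r > 0" and col1: "column 1 F = \<kappa> *s v"
  obtains e a0 a1 a2 where "e \<noteq> 0"
    "a0 \<in> trace_field \<Gamma>" "a1 \<in> trace_field \<Gamma>" "a2 \<in> trace_field \<Gamma>"
    "matrix_quadratic a0 a1 a2 (matrix_inv F ** p ** F) = mat3 0 0 e 0 0 0 0 0 0"
proof -
  have "complex_of_real r \<noteq> 0" using gram(2) by simp
  note inv = matrix_inv_scaled_isometry[OF gram(1) this]
  define P where "P = matrix_inv F ** p ** F"
  have "parabolic P" unfolding P_def using parabolic_conj[OF p(2) gram] .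
  have "column 1 P = l *s vec3 1 0 0"
    unfolding P_def using conj_eigenvector_first_column[OF inv(3) col1 p(3)] .
  hence "P $ 2 $ 1 = 0" "P $ 3 $ 1 = 0" by (simp_all add: vec_eq_iff)
  note tri = parabolic_upper_triangular[OF \<open>parabolic P\<close> this]
  have "\<nexists>y. negative_vec y \<and> fixes_pt P y" using \<open>parabolic P\<close> by (simp add: parabolic_def)
  then obtain e a0 a1 a2 where "e \<noteq> 0"
    and coeffs: "\<And>K. is_subfield K \<Longrightarrow> P$1$1 \<in> K \<Longrightarrow> a0 \<in> K \<and> a1 \<in> K \<and> a2 \<in> K"
    and "matrix_quadratic a0 a1 a2 P = mat3 0 0 e 0 0 0 0 0 0"
    using parabolic_triangular_annihilator[OF tri] by blast
  have "trace p = trace P" using trace_conj[OF inv(3)] by (simp add: P_def)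
  also have "trace P = 2 * P$1$1 + 1 / (P$1$1)\<^sup>2"
    by (subst tri(1)) (simp add: trace_def sum_3)
  finally have "P$1$1 \<in> trace_field \<Gamma>"
    using unimodular_eigenvalue_in_subfield[OF is_subfield_trace_field tri(2)]
      trace_in_trace_field[OF p(1)] trace_field_cnj[OF \<Gamma>] by metis
  hence "a0 \<in> trace_field \<Gamma>" "a1 \<in> trace_field \<Gamma>" "a2 \<in> trace_field \<Gamma>"
    using coeffs is_subfield_trace_field by blast+
  thus ?thesis using that \<open>e \<noteq> 0\<close> \<open>matrix_quadratic a0 a1 a2 P = _\<close> by (simp add: P_def)
qed

text \<open>Tracing the corner matrix unit \<open>e E\<^sub>1\<^sub>3\<close> against \<open>F\<^sup>-\<^sup>1 g F\<close> reads off the entry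
  \<open>\<langle>g f, f\<rangle> / \<langle>f\<^sub>2, f\<^sub>2\<rangle>\<close> for the first column \<open>f\<close> of the frame.\<close>
lemma parabolic_trace_form:
  assumes \<Gamma>: "is_subgroup_SU21 \<Gamma>" "zariski_dense_SU21 \<Gamma>" and p: "p \<in> \<Gamma>" "parabolic p"
  obtains c f where "c \<noteq> 0" "null_vec f" "\<forall>g\<in>\<Gamma>. c * herm (g *v f) f \<in> trace_field \<Gamma>"
proof -
  obtain v l where v: "null_vec v" "p *v v = l *s v"
    using p(2) by (auto simp: parabolic_def fixes_pt_def)
  obtain \<gamma> \<delta> r where vw: "herm v (\<gamma> *v v) \<noteq> 0" and "r > 0"
    and norm: "herm (witt_mid v (\<delta> *v v) (\<gamma> *v v)) (witt_mid v (\<delta> *v v) (\<gamma> *v v)) = of_real r"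
    and gram: "herm_adj (witt_frame v (\<delta> *v v) (\<gamma> *v v)) ** witt_frame v (\<delta> *v v) (\<gamma> *v v)
      = mat (of_real r)"
    using orbit_witt_frame[OF \<Gamma> v(1)] by blast
  define F where "F = witt_frame v (\<delta> *v v) (\<gamma> *v v)"
  define d :: complex where "d = of_real r"
  have d0: "d \<noteq> 0" using \<open>r > 0\<close> by (simp add: d_def)
  note gram' = gram[folded F_def d_def]
  have col1: "column 1 F = (d / herm v (\<gamma> *v v)) *s v"
    using norm by (simp add: F_def witt_frame_def d_def Let_def)
  obtain e a0 a1 a2 where "e \<noteq> 0" and aK: "a0 \<in> trace_field \<Gamma>" "a1 \<in> trace_field \<Gamma>"
      "a2 \<in> trace_field \<Gamma>"
    and corner: "matrix_quadratic a0 a1 a2 (matrix_inv F ** p ** F) = mat3 0 0 e 0 0 0 0 0 0"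
    using parabolic_frame_annihilator[OF \<Gamma>(1) p v(2) gram[folded F_def] \<open>r > 0\<close> col1] by blast
  have "e / d * herm (g *v column 1 F) (column 1 F) \<in> trace_field \<Gamma>" if "g \<in> \<Gamma>" for g
  proof -
    have "e / d * herm (g *v column 1 F) (column 1 F)
        = trace (matrix_quadratic a0 a1 a2 (matrix_inv F ** p ** F) ** (matrix_inv F ** g ** F))"
      by (simp add: corner trace_corner_mult conj_scaled_isometry_nth[OF gram' d0])
    also have "\<dots> = trace (matrix_quadratic a0 a1 a2 p ** g)"
      by (rule trace_matrix_quadratic_conj[OF matrix_inv_scaled_isometry(3)[OF gram' d0]])
    finally show ?thesis
      using trace_matrix_quadratic_in_trace_field[OF \<Gamma>(1) p(1) that aK] by simp
  qed
  moreover have "null_vec (column 1 F)"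
    using v(1) d0 vw by (auto simp: col1 null_vec_def herm_linear vec_eq_iff)
  ultimately show ?thesis using that[of "e / d"] \<open>e \<noteq> 0\<close> d0 by auto
qed

section \<open>Conjugating into the trace field\<close>

definition rational_left :: "cmat set \<Rightarrow> complex \<Rightarrow> cvec \<Rightarrow> cvec set" where
  "rational_left \<Gamma> c f = {x. \<forall>g\<in>\<Gamma>. c * herm (g *v x) f \<in> trace_field \<Gamma>}"

definition rational_right :: "cmat set \<Rightarrow> complex \<Rightarrow> cvec \<Rightarrow> cvec set" where
  "rational_right \<Gamma> c f = {y. \<forall>x\<in>rational_left \<Gamma> c f. c * herm x y \<in> trace_field \<Gamma>}"

context
  fixes \<Gamma> :: "cmat set" and c :: complex and f :: cvec
  assumes \<Gamma>: "is_subgroup_SU21 \<Gamma>"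
begin

lemma rational_left_mult: "g \<in> \<Gamma> \<Longrightarrow> x \<in> rational_left \<Gamma> c f \<Longrightarrow> g *v x \<in> rational_left \<Gamma> c f"
  using subgroup_SU21_mult[OF \<Gamma>] by (simp add: rational_left_def matrix_vector_mul_assoc)

lemma rational_right_orbit: "g \<in> \<Gamma> \<Longrightarrow> g *v f \<in> rational_right \<Gamma> c f"
  using subgroup_SU21_herm_adj[OF \<Gamma>]
  by (simp add: rational_right_def rational_left_def herm_adj_right)

lemma rational_left_diff:
  "x \<in> rational_left \<Gamma> c f \<Longrightarrow> y \<in> rational_left \<Gamma> c f \<Longrightarrow> x - y \<in> rational_left \<Gamma> c f"
  using is_subfield_trace_field
  by (simp add: rational_left_def matrix_vector_mult_diff_distrib herm_linear right_diff_distrib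
      subfield_intros)

lemma rational_left_scale:
  assumes "k \<in> trace_field \<Gamma>" "x \<in> rational_left \<Gamma> c f"
  shows "k *s x \<in> rational_left \<Gamma> c f"
proof -
  have "c * herm (g *v (k *s x)) f \<in> trace_field \<Gamma>" if "g \<in> \<Gamma>" for g
  proof -
    have "k * (c * herm (g *v x) f) \<in> trace_field \<Gamma>"
      using assms that subfield_mult[OF is_subfield_trace_field] by (simp add: rational_left_def)
    thus ?thesis by (simp add: matrix_vector_mult_scale herm_linear mult.left_commute)
  qed
  thus ?thesis by (simp add: rational_left_def)
qed

lemma rational_right_diff:
  "x \<in> rational_right \<Gamma> c f \<Longrightarrow> y \<in> rational_right \<Gamma> c f \<Longrightarrow> x - y \<in> rational_right \<Gamma> c f"
  using is_subfield_trace_field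
  by (simp add: rational_right_def herm_linear right_diff_distrib subfield_intros)

lemma rational_right_scale:
  assumes "k \<in> trace_field \<Gamma>" "y \<in> rational_right \<Gamma> c f"
  shows "k *s y \<in> rational_right \<Gamma> c f"
proof -
  have "c * herm x (k *s y) \<in> trace_field \<Gamma>" if "x \<in> rational_left \<Gamma> c f" for x
  proof -
    have "cnj k * (c * herm x y) \<in> trace_field \<Gamma>"
      using assms that subfield_mult[OF is_subfield_trace_field] trace_field_cnj[OF \<Gamma>]
      by (simp add: rational_right_def)
    thus ?thesis by (simp add: herm_linear mult.left_commute)
  qed
  thus ?thesis by (simp add: rational_right_def)
qed

lemma herm_ratio_rational:
  assumes "c \<noteq> 0" "x \<in> rational_left \<Gamma> c f" "x' \<in> rational_left \<Gamma> c f"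
    "y \<in> rational_right \<Gamma> c f" "y' \<in> rational_right \<Gamma> c f"
  shows "herm x y / herm x' y' \<in> trace_field \<Gamma>"
proof -
  have "herm x y / herm x' y' = (c * herm x y) / (c * herm x' y')" using assms(1) by simp
  moreover have "c * herm x y \<in> trace_field \<Gamma>" "c * herm x' y' \<in> trace_field \<Gamma>"
    using assms(2-5) by (auto simp: rational_right_def)
  ultimately show ?thesis using subfield_divide[OF is_subfield_trace_field] by metis
qed

end

text \<open>A frame built from the \<open>\<Gamma>\<close>-orbit of \<open>f\<close> has all its columns rational on both sides,
  so the entries of \<open>F\<^sup>-\<^sup>1 g F\<close>, which are ratios of values of the form, lie in \<open>Tr(\<Gamma>)\<close>.\<close>
lemma conjugate_into_trace_field:
  assumes \<Gamma>: "is_subgroup_SU21 \<Gamma>" "zariski_dense_SU21 \<Gamma>"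
    and "c \<noteq> 0" "null_vec f" and cf: "\<forall>g\<in>\<Gamma>. c * herm (g *v f) f \<in> trace_field \<Gamma>"
  shows "\<exists>h\<in>SU21. \<forall>g\<in>\<Gamma>. \<forall>i j. (h ** g ** matrix_inv h) $ i $ j \<in> trace_field \<Gamma>"
proof -
  let ?L = "rational_left \<Gamma> c f" and ?R = "rational_right \<Gamma> c f"
  note ratio = herm_ratio_rational[OF \<Gamma>(1) \<open>c \<noteq> 0\<close>]
  obtain \<gamma> \<delta> r where \<gamma>\<delta>: "\<gamma> \<in> \<Gamma>" "\<delta> \<in> \<Gamma>" "herm f (\<gamma> *v f) \<noteq> 0" and "r > 0"
    and norm: "herm (witt_mid f (\<delta> *v f) (\<gamma> *v f)) (witt_mid f (\<delta> *v f) (\<gamma> *v f)) = of_real r"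
    and gram: "herm_adj (witt_frame f (\<delta> *v f) (\<gamma> *v f)) ** witt_frame f (\<delta> *v f) (\<gamma> *v f)
      = mat (of_real r)"
    using orbit_witt_frame[OF \<Gamma> \<open>null_vec f\<close>] by blast
  define F where "F = witt_frame f (\<delta> *v f) (\<gamma> *v f)"
  define m where "m = witt_mid f (\<delta> *v f) (\<gamma> *v f)"
  have mm: "herm m m \<noteq> 0" using norm \<open>r > 0\<close> by (simp add: m_def)
  have gram': "herm_adj F ** F = mat (herm m m)" using gram norm by (simp add: F_def m_def)
  have f: "f \<in> ?L" "f \<in> ?R"
    using cf rational_right_orbit[OF \<Gamma>(1) subgroup_SU21_one[OF \<Gamma>(1)]]
    by (simp_all add: rational_left_def)
  have orbit: "g *v f \<in> ?L" "g *v f \<in> ?R" if "g \<in> \<Gamma>" for g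
    using that f rational_left_mult[OF \<Gamma>(1)] rational_right_orbit[OF \<Gamma>(1)] by auto
  have "herm (\<gamma> *v f) f \<noteq> 0" using \<gamma>\<delta>(3) herm_eq_0_commute by blast
  hence m: "m \<in> ?L" "m \<in> ?R"
    unfolding m_def witt_mid_def
    using ratio orbit[OF \<gamma>\<delta>(1)] orbit[OF \<gamma>\<delta>(2)] f
    by (meson rational_left_diff rational_left_scale rational_right_diff rational_right_scale \<Gamma>(1))+
  hence "herm m m / herm f (\<gamma> *v f) \<in> trace_field \<Gamma>" using ratio f orbit[OF \<gamma>\<delta>(1)] by blast
  hence columns: "column k F \<in> ?L \<and> column k F \<in> ?R" for k
    using exhaust_3[of k] m f orbit[OF \<gamma>\<delta>(1)]
      rational_left_scale[OF \<Gamma>(1)] rational_right_scale[OF \<Gamma>(1)]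
    by (auto simp: F_def witt_frame_def Let_def m_def[symmetric])
  have "(matrix_inv F ** g ** F) $ i $ j \<in> trace_field \<Gamma>" if "g \<in> \<Gamma>" for g i j
    using ratio[OF rational_left_mult[OF \<Gamma>(1) that conjunct1[OF columns]] m(1)
        conjunct2[OF columns] m(2)]
    by (simp add: conj_scaled_isometry_nth[OF gram' mm])
  moreover obtain h where "h \<in> SU21" "\<And>g. h ** g ** matrix_inv h = matrix_inv F ** g ** F"
    using rescale_into_SU21[OF gram[folded F_def] \<open>r > 0\<close>] by blast
  ultimately show ?thesis by (intro bexI[of _ h]) simp_all
qed

theorem mainTheorem1:
  fixes \<Gamma> :: "cmat set"
  assumes "is_subgroup_SU21 \<Gamma>"
    and "\<exists>g\<in>\<Gamma>. parabolic g"
    and "zariski_dense_SU21 \<Gamma>"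
  shows "\<exists>h\<in>SU21. \<forall>g\<in>\<Gamma>. \<forall>i j. (h ** g ** matrix_inv h) $ i $ j \<in> trace_field \<Gamma>"
proof -
  obtain p where "p \<in> \<Gamma>" "parabolic p" using assms(2) by blast
  then obtain c f where "c \<noteq> 0" "null_vec f" "\<forall>g\<in>\<Gamma>. c * herm (g *v f) f \<in> trace_field \<Gamma>"
    using parabolic_trace_form assms(1,3) by blast
  thus ?thesis using conjugate_into_trace_field assms(1,3) by blast
qed

end
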